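(* Assume $\alpha\ge(N-1)/(N-2)$, let $1\le k\le N/2$ and let $v\in E_k$. If $k>1$ or if $t(v)<1$, then $v$ is linearly unstable.
   Context: Let $N\ge3$, $\alpha>1$, and $A_{i,j}=1-\delta_{i,j}$ for $i,j\le N$. Let $\Delta=\{v\in\mathbb R_+^N:\sum_iv_i=1,\ v_i\le3/4\ \forall i\}$. For $v$ with nonnegative coordinates let $v^\alpha=(v_i^\alpha)_i$, $H(v)=\sum_{i\neq j}v_i^\alpha v_j^\alpha$, $\pi_i(v)=v_i^\alpha(Av^\alpha)_i/H(v)$, and on $\Delta$ let $F(v)=-v+\pi(v)$. An equilibrium is $v\in\Delta$ with $F(v)=0$. For $1\le k\le N/2$, $E_k$ denotes the set of equilibria $v$ with all coordinates positive, different from the center $(1/N,\dots,1/N)$, and such that $v_1=\dots=v_k$ and $v_{k+1}=\dots=v_N$. For $v\in E_k$, $t(v)=v_N/v_1$. With $DF(v)$ the differential at $v$ of $v\mapsto-v+\pi(v)$ acting on $\{x:\sum_ix_i=0\}$, an equilibrium is linearly unstable if some eigenvalue of $DF(v)$ has positive real part. *)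

theory Defs
  imports "HOL-Analysis.Analysis"
begin

text \<open>Vectors in R^N are functions nat => real, with coordinates indexed by 1..N.\<close>

definition Hfun :: "nat \<Rightarrow> real \<Rightarrow> (nat \<Rightarrow> real) \<Rightarrow> real" where
  "Hfun N \<alpha> v = (\<Sum>i\<in>{1..N}. \<Sum>j\<in>{1..N}-{i}. v i powr \<alpha> * v j powr \<alpha>)"

definition Avalpha :: "nat \<Rightarrow> real \<Rightarrow> (nat \<Rightarrow> real) \<Rightarrow> nat \<Rightarrow> real" where
  "Avalpha N \<alpha> v i = (\<Sum>j\<in>{1..N}. (if i = j then 0 else 1) * v j powr \<alpha>)"

definition pifun :: "nat \<Rightarrow> real \<Rightarrow> (nat \<Rightarrow> real) \<Rightarrow> nat \<Rightarrow> real" where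
  "pifun N \<alpha> v i = v i powr \<alpha> * Avalpha N \<alpha> v i / Hfun N \<alpha> v"

definition Ffun :: "nat \<Rightarrow> real \<Rightarrow> (nat \<Rightarrow> real) \<Rightarrow> nat \<Rightarrow> real" where
  "Ffun N \<alpha> v i = - v i + pifun N \<alpha> v i"

definition in_Delta :: "nat \<Rightarrow> (nat \<Rightarrow> real) \<Rightarrow> bool" where
  "in_Delta N v \<longleftrightarrow> (\<forall>i\<in>{1..N}. 0 \<le> v i \<and> v i \<le> 3/4) \<and> (\<Sum>i\<in>{1..N}. v i) = 1"

definition equilibrium :: "nat \<Rightarrow> real \<Rightarrow> (nat \<Rightarrow> real) \<Rightarrow> bool" where
  "equilibrium N \<alpha> v \<longleftrightarrow> in_Delta N v \<and> (\<forall>i\<in>{1..N}. Ffun N \<alpha> v i = 0)"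

definition E_set :: "nat \<Rightarrow> real \<Rightarrow> nat \<Rightarrow> (nat \<Rightarrow> real) set" where
  "E_set N \<alpha> k = {v. equilibrium N \<alpha> v \<and> (\<forall>i\<in>{1..N}. v i > 0)
      \<and> (\<exists>i\<in>{1..N}. v i \<noteq> 1 / real N)
      \<and> (\<forall>i\<in>{1..k}. v i = v 1) \<and> (\<forall>i\<in>{k+1..N}. v i = v N)}"

definition tval :: "nat \<Rightarrow> (nat \<Rightarrow> real) \<Rightarrow> real" where
  "tval N v = v N / v 1"

definition jac :: "nat \<Rightarrow> real \<Rightarrow> (nat \<Rightarrow> real) \<Rightarrow> nat \<Rightarrow> nat \<Rightarrow> real" where
  "jac N \<alpha> v i j = deriv (\<lambda>s. Ffun N \<alpha> (v(j := v j + s)) i) 0"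

definition linearly_unstable :: "nat \<Rightarrow> real \<Rightarrow> (nat \<Rightarrow> real) \<Rightarrow> bool" where
  "linearly_unstable N \<alpha> v \<longleftrightarrow>
     (\<exists>mu::complex. Re mu > 0 \<and>
        (\<exists>x :: nat \<Rightarrow> complex. (\<exists>i\<in>{1..N}. x i \<noteq> 0) \<and> (\<Sum>i\<in>{1..N}. x i) = 0 \<and>
           (\<forall>i\<in>{1..N}. (\<Sum>j\<in>{1..N}. complex_of_real (jac N \<alpha> v i j) * x j) = mu * x i)))"

end

theory Submission
  imports Defs
begin

text \<open>Write \<open>a = v\<^sub>p\<^sup>\<alpha>\<close> and \<open>S = \<Sum>\<^sub>l v\<^sub>l\<^sup>\<alpha>\<close>. For \<open>v \<in> E\<^sub>k\<close> as in the hypotheses, the smaller of the two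
  coordinate values is attained at two indices \<open>p \<noteq> q\<close>. Because \<open>v\<^sub>p = v\<^sub>q\<close>, the Jacobian is
  unchanged by swapping \<open>p\<close> and \<open>q\<close>, so \<open>e\<^sub>p - e\<^sub>q\<close>, which lies in the hyperplane \<open>\<Sum>x\<^sub>i = 0\<close>, is an
  eigenvector; by the equilibrium equation at \<open>p\<close> its eigenvalue is \<open>-1 + \<alpha>(S - 2a)/(S - a)\<close>.
  Since \<open>v\<^sub>p\<close> is a strict minimum of the coordinates, \<open>S > N a\<close>, and together with
  \<open>\<alpha>(N - 2) \<ge> N - 1\<close> this gives \<open>\<alpha>(S - 2a) > S - a\<close>, i.e.\ a positive eigenvalue.\<close>

definition total_weight :: "nat \<Rightarrow> real \<Rightarrow> (nat \<Rightarrow> real) \<Rightarrow> real" where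
  "total_weight N \<alpha> v = (\<Sum>l\<in>{1..N}. v l powr \<alpha>)"

lemma Avalpha_eq_total_weight_minus:
  assumes "i \<in> {1..N}"
  shows "Avalpha N \<alpha> v i = total_weight N \<alpha> v - v i powr \<alpha>"
proof -
  have "Avalpha N \<alpha> v i = (\<Sum>l\<in>{1..N}. v l powr \<alpha> - (if l = i then v i powr \<alpha> else 0))"
    unfolding Avalpha_def by (rule sum.cong) auto
  then show ?thesis
    using assms by (simp add: sum_subtractf total_weight_def)
qed

lemma Hfun_eq_total_weight_square:
  "Hfun N \<alpha> v = (total_weight N \<alpha> v)\<^sup>2 - (\<Sum>l\<in>{1..N}. (v l powr \<alpha>)\<^sup>2)"
proof -
  have "Hfun N \<alpha> v = (\<Sum>i\<in>{1..N}. v i powr \<alpha> * (total_weight N \<alpha> v - v i powr \<alpha>))"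
    unfolding Hfun_def total_weight_def
    by (rule sum.cong) (auto simp: sum_distrib_left[symmetric] sum_diff1)
  then show ?thesis
    by (simp add: total_weight_def right_diff_distrib sum_subtractf power2_eq_square
        sum_distrib_right[symmetric] mult.commute)
qed

lemma Hfun_pos:
  assumes "N \<ge> 2" and pos: "\<forall>l\<in>{1..N}. v l > 0"
  shows "Hfun N \<alpha> v > 0"
  unfolding Hfun_def
proof (intro sum_pos)
  show "{1..N} \<noteq> {}" using assms(1) by auto
  fix i assume i: "i \<in> {1..N}"
  have "(if i = 1 then 2 else 1) \<in> {1..N} - {i}" using assms(1) i by auto
  then show "{1..N} - {i} \<noteq> {}" by blast
  fix j assume "j \<in> {1..N} - {i}"
  then have "v i > 0" "v j > 0" using pos i by auto
  then show "v i powr \<alpha> * v j powr \<alpha> > 0" by simp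
qed auto

lemma DERIV_powr_update:
  fixes v :: "nat \<Rightarrow> real"
  assumes "v j > 0"
  shows "((\<lambda>s. (v(j := v j + s)) l powr \<alpha>) has_real_derivative
           (if l = j then \<alpha> * v j powr \<alpha> / v j else 0)) (at 0)"
proof (cases "l = j")
  case True
  have "DERIV (\<lambda>s. (v j + s) powr \<alpha>) 0 :> \<alpha> * (v j + 0) powr (\<alpha> - of_nat 1) * 1"
    by (rule DERIV_fun_powr) (auto intro!: derivative_eq_intros assms)
  then show ?thesis using True assms by (simp add: powr_diff)
qed simp

lemma DERIV_total_weight_update:
  fixes v :: "nat \<Rightarrow> real"
  assumes "j \<in> {1..N}" and "v j > 0"
  shows "DERIV (\<lambda>s. total_weight N \<alpha> (v(j := v j + s))) 0 :> \<alpha> * v j powr \<alpha> / v j"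
proof -
  have "DERIV (\<lambda>s. \<Sum>l\<in>{1..N}. (v(j := v j + s)) l powr \<alpha>) 0
      :> (\<Sum>l\<in>{1..N}. if l = j then \<alpha> * v j powr \<alpha> / v j else 0)"
    by (rule DERIV_sum) (rule DERIV_powr_update[where v=v and j=j, OF assms(2)])
  then show ?thesis using assms(1) by (simp add: total_weight_def)
qed

lemma DERIV_sum_squares_update:
  fixes v :: "nat \<Rightarrow> real"
  assumes "j \<in> {1..N}" and "v j > 0"
  shows "DERIV (\<lambda>s. \<Sum>l\<in>{1..N}. ((v(j := v j + s)) l powr \<alpha>)\<^sup>2) 0
    :> 2 * v j powr \<alpha> * (\<alpha> * v j powr \<alpha> / v j)"
proof -
  have "DERIV (\<lambda>s. \<Sum>l\<in>{1..N}. ((v(j := v j + s)) l powr \<alpha>)\<^sup>2) 0 :> (\<Sum>l\<in>{1..N}.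
      of_nat 2 * ((if l = j then \<alpha> * v j powr \<alpha> / v j else 0) * (v l powr \<alpha>) ^ (2 - Suc 0)))"
    by (rule DERIV_sum, rule DERIV_cong[OF DERIV_power[OF DERIV_powr_update[where v=v and j=j, OF assms(2)]]]) simp
  moreover have "(\<Sum>l\<in>{1..N}. of_nat 2 * ((if l = j then \<alpha> * v j powr \<alpha> / v j else 0)
      * (v l powr \<alpha>) ^ (2 - Suc 0)))
    = (\<Sum>l\<in>{1..N}. if l = j then 2 * v j powr \<alpha> * (\<alpha> * v j powr \<alpha> / v j) else 0)"
    by (rule sum.cong) auto
  ultimately show ?thesis using assms(1) by simp
qed

lemma jac_eq:
  fixes \<alpha> :: real
  assumes "N \<ge> 2" and pos: "\<forall>l\<in>{1..N}. v l > 0" and i: "i \<in> {1..N}" and j: "j \<in> {1..N}"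
  defines "S \<equiv> total_weight N \<alpha> v" and "H \<equiv> Hfun N \<alpha> v"
  shows "jac N \<alpha> v i j = - (if i = j then 1 else 0)
    + \<alpha> * v j powr \<alpha> / v j * ((if i = j then S - v i powr \<alpha> else v i powr \<alpha>) / H
        - 2 * v i powr \<alpha> * (S - v i powr \<alpha>) * (S - v j powr \<alpha>) / H\<^sup>2)"
proof -
  define u where "u s = v(j := v j + s)" for s
  define d where "d = \<alpha> * v j powr \<alpha> / v j"
  define di where "di = (if i = j then d else 0)"
  have H: "H > 0" unfolding H_def using Hfun_pos[OF assms(1) pos] .
  have vj: "v j > 0" using pos j by blast
  have F_eq: "Ffun N \<alpha> (u s) i = - u s i + u s i powr \<alpha> * (total_weight N \<alpha> (u s) - u s i powr \<alpha>)
       / ((total_weight N \<alpha> (u s))\<^sup>2 - (\<Sum>l\<in>{1..N}. (u s l powr \<alpha>)\<^sup>2))" for s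
    unfolding Ffun_def pifun_def Avalpha_eq_total_weight_minus[OF i] Hfun_eq_total_weight_square ..
  have dS: "DERIV (\<lambda>s. total_weight N \<alpha> (u s)) 0 :> d"
    unfolding u_def d_def using DERIV_total_weight_update[where v=v and j=j, OF j vj] .
  have dQ: "DERIV (\<lambda>s. \<Sum>l\<in>{1..N}. (u s l powr \<alpha>)\<^sup>2) 0 :> 2 * v j powr \<alpha> * d"
    unfolding u_def d_def using DERIV_sum_squares_update[where v=v and j=j, OF j vj] .
  have dwi: "DERIV (\<lambda>s. u s i powr \<alpha>) 0 :> di"
    unfolding u_def di_def d_def using DERIV_powr_update[where v=v and j=j, OF vj] .
  have dui: "DERIV (\<lambda>s. u s i) 0 :> (if i = j then 1 else 0)"
    unfolding u_def by (cases "i = j") (auto intro!: derivative_eq_intros)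
  have u0: "u 0 = v" unfolding u_def by simp
  have "DERIV (\<lambda>s. Ffun N \<alpha> (u s) i) 0 :>
     - (if i = j then 1 else 0) + ((di * (S - v i powr \<alpha>) + v i powr \<alpha> * (d - di)) * H
        - v i powr \<alpha> * (S - v i powr \<alpha>) * (2 * S * d - 2 * v j powr \<alpha> * d)) / (H * H)"
    unfolding F_eq
    by (rule DERIV_cong[OF DERIV_add[OF DERIV_minus[OF dui]
          DERIV_divide[OF DERIV_mult[OF dwi DERIV_diff[OF dS dwi]] DERIV_diff[OF DERIV_power[OF dS] dQ]]]])
      (use H in \<open>simp_all add: u0 S_def H_def Hfun_eq_total_weight_square mult_ac\<close>)
  moreover have "- (if i = j then 1 else 0) + ((di * (S - v i powr \<alpha>) + v i powr \<alpha> * (d - di)) * H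
        - v i powr \<alpha> * (S - v i powr \<alpha>) * (2 * S * d - 2 * v j powr \<alpha> * d)) / (H * H)
    = - (if i = j then 1 else 0) + d * ((if i = j then S - v i powr \<alpha> else v i powr \<alpha>) / H
        - 2 * v i powr \<alpha> * (S - v i powr \<alpha>) * (S - v j powr \<alpha>) / H\<^sup>2)"
    using H by (cases "i = j") (simp_all add: di_def field_simps power2_eq_square)
  ultimately show ?thesis
    unfolding jac_def u_def d_def by (simp add: DERIV_imp_deriv)
qed

lemma jac_equal_coordinates:
  fixes \<alpha> :: real
  assumes "N \<ge> 2" and pos: "\<forall>l\<in>{1..N}. v l > 0"
    and pq: "p \<in> {1..N}" "q \<in> {1..N}" "p \<noteq> q" "v p = v q" and i: "i \<in> {1..N}"
  shows "jac N \<alpha> v i p - jac N \<alpha> v i q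
    = (jac N \<alpha> v p p - jac N \<alpha> v p q) * ((if i = p then 1 else 0) - (if i = q then 1 else 0))"
proof -
  note jac = jac_eq[OF assms(1) pos]
  consider "i = p" | "i = q" | "i \<noteq> p" "i \<noteq> q" by blast
  then show ?thesis
  proof cases
    case 2
    then show ?thesis using pq by (simp add: jac field_simps)
  next
    case 3
    then show ?thesis using pq i by (simp add: jac)
  qed simp
qed

lemma jac_diff_at_equilibrium:
  fixes \<alpha> :: real
  assumes "N \<ge> 2" and pos: "\<forall>l\<in>{1..N}. v l > 0"
    and pq: "p \<in> {1..N}" "q \<in> {1..N}" "p \<noteq> q" "v p = v q"
    and eq: "Ffun N \<alpha> v p = 0"
  defines "S \<equiv> total_weight N \<alpha> v" and "a \<equiv> v p powr \<alpha>"
  shows "jac N \<alpha> v p p - jac N \<alpha> v p q = -1 + \<alpha> * (S - 2 * a) / (S - a)"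
proof -
  define H where "H = Hfun N \<alpha> v"
  have H: "H > 0" unfolding H_def using Hfun_pos[OF assms(1) pos] .
  have vp: "v p > 0" using pos pq by auto
  have vp_eq: "v p = a * (S - a) / H"
    using eq unfolding Ffun_def pifun_def Avalpha_eq_total_weight_minus[OF pq(1)]
    by (simp add: a_def S_def H_def)
  have Sa: "S - a \<noteq> 0" using vp_eq vp by auto
  have "H * v p = a * (S - a)" using vp_eq H by (simp add: field_simps)
  then have d: "\<alpha> * a / v p = \<alpha> * H / (S - a)"
    using vp Sa by (simp add: frac_eq_eq mult.assoc)
  have "jac N \<alpha> v p p - jac N \<alpha> v p q = -1 + \<alpha> * a / v p * ((S - a) / H - a / H)"
  proof -
    have "jac N \<alpha> v p p = -1 + \<alpha> * a / v p * ((S - a) / H - 2 * a * (S - a) * (S - a) / H\<^sup>2)"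
      using pq by (simp add: jac_eq[OF assms(1) pos] a_def S_def H_def)
    moreover have "jac N \<alpha> v p q = \<alpha> * a / v p * (a / H - 2 * a * (S - a) * (S - a) / H\<^sup>2)"
      using pq by (simp add: jac_eq[OF assms(1) pos] a_def S_def H_def)
    ultimately show ?thesis
      by (simp add: algebra_simps)
  qed
  also have "\<dots> = -1 + \<alpha> * (S - 2 * a) / (S - a)"
    unfolding d using H by (simp add: diff_divide_distrib[symmetric])
  finally show ?thesis .
qed

lemma linearly_unstable_if_equal_coordinates:
  fixes \<alpha> :: real
  assumes "N \<ge> 2" and pos: "\<forall>l\<in>{1..N}. v l > 0"
    and pq: "p \<in> {1..N}" "q \<in> {1..N}" "p \<noteq> q" "v p = v q"
    and growth: "jac N \<alpha> v p p - jac N \<alpha> v p q > 0"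
  shows "linearly_unstable N \<alpha> v"
proof -
  define \<mu> where "\<mu> = jac N \<alpha> v p p - jac N \<alpha> v p q"
  define x :: "nat \<Rightarrow> real" where "x j = (if j = p then 1 else 0) - (if j = q then 1 else 0)" for j
  have "(\<Sum>i\<in>{1..N}. x i) = 0" using pq by (simp add: x_def sum_subtractf)
  moreover have "(\<Sum>j\<in>{1..N}. jac N \<alpha> v i j * x j) = \<mu> * x i" if i: "i \<in> {1..N}" for i
  proof -
    have "(\<Sum>j\<in>{1..N}. jac N \<alpha> v i j * x j)
        = (\<Sum>j\<in>{1..N}. (if j = p then jac N \<alpha> v i p else 0) - (if j = q then jac N \<alpha> v i q else 0))"
      by (rule sum.cong) (simp_all add: x_def right_diff_distrib)
    also have "\<dots> = jac N \<alpha> v i p - jac N \<alpha> v i q"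
      using pq by (simp add: sum_subtractf)
    also have "\<dots> = \<mu> * x i"
      unfolding \<mu>_def x_def using jac_equal_coordinates[OF assms(1) pos pq i] .
    finally show ?thesis .
  qed
  moreover have "x p \<noteq> 0" using pq by (simp add: x_def)
  ultimately show ?thesis
    unfolding linearly_unstable_def using growth pq(1)
    by (intro exI[of _ "complex_of_real \<mu>"] exI[of _ "\<lambda>j. complex_of_real (x j)"] conjI)
      (auto simp: \<mu>_def simp flip: of_real_mult of_real_sum of_real_diff)
qed

lemma N_mul_powr_lt_total_weight:
  fixes \<alpha> :: real
  assumes "\<alpha> > 0" and "v p > 0"
    and "\<forall>i\<in>{1..N}. v p \<le> v i" and "\<exists>i\<in>{1..N}. v p < v i"
  shows "real N * v p powr \<alpha> < total_weight N \<alpha> v"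
proof -
  obtain j where "j \<in> {1..N}" "v p < v j" using assms(4) by blast
  then have "\<exists>i\<in>{1..N}. v p powr \<alpha> < v i powr \<alpha>"
    using assms(1,2) by (intro bexI[of _ j] powr_less_mono2) auto
  then have "(\<Sum>i\<in>{1..N}. v p powr \<alpha>) < (\<Sum>i\<in>{1..N}. v i powr \<alpha>)"
    using assms(1-3) by (intro sum_strict_mono_ex1) (auto intro: powr_mono2)
  then show ?thesis by (simp add: total_weight_def)
qed

lemma instability_margin:
  fixes N :: nat and \<alpha> a S :: real
  assumes "N \<ge> 3" and "\<alpha> > 1" and "\<alpha> \<ge> (real N - 1) / (real N - 2)"
    and "a \<ge> 0" and "real N * a < S"
  shows "S - a < \<alpha> * (S - 2 * a)"
proof -
  have "\<alpha> * (real N - 2) \<ge> real N - 1" using assms(1,3) by (simp add: field_simps)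
  then have "a * (\<alpha> * (real N - 2)) \<ge> a * (real N - 1)" using assms(4) by (rule mult_left_mono)
  moreover have "(\<alpha> - 1) * S > (\<alpha> - 1) * (real N * a)" using assms(2,5) by simp
  ultimately show ?thesis by (simp add: algebra_simps)
qed

lemma E_set_two_values:
  assumes "N \<ge> 1" and "v \<in> E_set N \<alpha> k"
  shows "\<forall>i\<in>{1..N}. v i = v 1 \<or> v i = v N" and "v 1 \<noteq> v N"
proof -
  have E: "in_Delta N v" "\<exists>i\<in>{1..N}. v i \<noteq> 1 / real N"
     "\<forall>i\<in>{1..k}. v i = v 1" "\<forall>i\<in>{k+1..N}. v i = v N"
    using assms(2) unfolding E_set_def equilibrium_def by blast+
  show two: "\<forall>i\<in>{1..N}. v i = v 1 \<or> v i = v N"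
  proof
    fix i assume "i \<in> {1..N}"
    then have "i \<in> {1..k} \<or> i \<in> {k+1..N}" by auto
    then show "v i = v 1 \<or> v i = v N" using E(3,4) by blast
  qed
  show "v 1 \<noteq> v N"
  proof
    assume "v 1 = v N"
    then have const: "\<forall>i\<in>{1..N}. v i = v 1" using two by metis
    have "(\<Sum>i\<in>{1..N}. v i) = (\<Sum>i\<in>{1..N}. v 1)" by (rule sum.cong[OF refl]) (use const in blast)
    then have "real N * v 1 = 1" using E(1) by (simp add: in_Delta_def)
    then have "v 1 = 1 / real N" using assms(1) by (simp add: field_simps)
    then show False using E(2) const by auto
  qed
qed

text \<open>The second block has \<open>N - k \<ge> 2\<close> entries; if instead the first block carries the minimum,
  then \<open>t(v) > 1\<close>, so \<open>k > 1\<close> by hypothesis.\<close>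

lemma E_set_repeated_strict_minimum:
  assumes "N \<ge> 3" and "1 \<le> k" and "2 * k \<le> N" and E: "v \<in> E_set N \<alpha> k"
    and "k > 1 \<or> tval N v < 1"
  obtains p q where "p \<in> {1..N}" "q \<in> {1..N}" "p \<noteq> q" "v p = v q"
    and "\<forall>i\<in>{1..N}. v p \<le> v i" and "\<exists>i\<in>{1..N}. v p < v i"
proof -
  have two: "\<forall>i\<in>{1..N}. v i = v 1 \<or> v i = v N" and ne: "v 1 \<noteq> v N"
    using E_set_two_values[OF _ E] assms(1) by auto
  have pos: "\<forall>i\<in>{1..N}. v i > 0"
    and blocks: "\<forall>i\<in>{1..k}. v i = v 1" "\<forall>i\<in>{k+1..N}. v i = v N"
    using E unfolding E_set_def by blast+
  have N: "1 \<in> {1..N}" "N \<in> {1..N}" using assms(1) by auto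
  show ?thesis
  proof (cases "v N < v 1")
    case True
    have "N - 1 \<in> {k+1..N}" using assms(1-3) by auto
    then have "v (N - 1) = v N" using blocks(2) by blast
    moreover have "\<forall>i\<in>{1..N}. v N \<le> v i" using two True by force
    moreover have "N - 1 \<in> {1..N}" "N - 1 \<noteq> N" using assms(1) by auto
    moreover have "\<exists>i\<in>{1..N}. v N < v i" using True N(1) by blast
    ultimately show ?thesis
      using that[of "N - 1" N] N(2) by simp
  next
    case False
    with ne have lt: "v 1 < v N" by auto
    have "k > 1"
    proof (rule ccontr)
      assume "\<not> k > 1"
      then have "v N / v 1 < 1" using assms(5) by (simp add: tval_def)
      then show False using lt pos N(1) by (simp add: divide_less_eq)
    qed
    then have "2 \<in> {1..k}" "2 \<in> {1..N}" using assms(3) by auto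
    then have "v 2 = v 1" using blocks(1) by blast
    moreover have "\<forall>i\<in>{1..N}. v 1 \<le> v i" using two lt by force
    moreover have "\<exists>i\<in>{1..N}. v 1 < v i" using lt N(2) by blast
    ultimately show ?thesis
      using that[of 1 2] N(1) \<open>2 \<in> {1..N}\<close> by simp
  qed
qed

theorem lemma4p4:
  fixes N k :: nat and \<alpha> :: real and v :: "nat \<Rightarrow> real"
  assumes "N \<ge> 3" and "\<alpha> > 1"
    and "\<alpha> \<ge> (real N - 1) / (real N - 2)"
    and "1 \<le> k" and "2 * k \<le> N"
    and "v \<in> E_set N \<alpha> k"
    and "k > 1 \<or> tval N v < 1"
  shows "linearly_unstable N \<alpha> v"
proof -
  obtain p q where pq: "p \<in> {1..N}" "q \<in> {1..N}" "p \<noteq> q" "v p = v q"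
    and min: "\<forall>i\<in>{1..N}. v p \<le> v i" "\<exists>i\<in>{1..N}. v p < v i"
    using E_set_repeated_strict_minimum[OF assms(1,4,5,6,7)] by blast
  have pos: "\<forall>l\<in>{1..N}. v l > 0" and "Ffun N \<alpha> v p = 0"
    using assms(6) pq(1) unfolding E_set_def equilibrium_def by auto
  define S where "S = total_weight N \<alpha> v"
  define a where "a = v p powr \<alpha>"
  have "v p > 0" using pos pq(1) by blast
  then have "a > 0" by (simp add: a_def)
  have "real N * a < S"
    unfolding a_def S_def using N_mul_powr_lt_total_weight assms(2) \<open>v p > 0\<close> min by simp
  then have margin: "S - a < \<alpha> * (S - 2 * a)" and "S - a > 0"
    using instability_margin[OF assms(1-3)] \<open>a > 0\<close> assms(1)
    by (auto intro: less_le_trans[of a "real N * a"])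
  have "jac N \<alpha> v p p - jac N \<alpha> v p q = -1 + \<alpha> * (S - 2 * a) / (S - a)"
    unfolding S_def a_def using jac_diff_at_equilibrium assms(1) pos pq \<open>Ffun N \<alpha> v p = 0\<close> by simp
  also have "\<dots> > 0" using margin \<open>S - a > 0\<close> by (simp add: less_divide_eq)
  finally show ?thesis
    using linearly_unstable_if_equal_coordinates assms(1) pos pq by simp
qed

end
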